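(* Assume (A1) and (A2). Consider the problem of maximizing expected revenue $\int_{\underline{\theta}}^{\overline{\theta}}p(\theta)f(\theta)\,d\theta$ over mechanisms $\theta\mapsto(x(\theta),p(\theta))$, where $x(\theta)$ is a probability distribution over allocations and $p(\theta)\in\mathbb{R}$, subject to: incentive compatibility $\mathbb{E}[u(x(\theta),\theta)]-p(\theta)\ge\mathbb{E}[u(x(\theta'),\theta)]-p(\theta')$ for all $\theta,\theta'$; individual rationality $\mathbb{E}[u(x(\theta),\theta)]-p(\theta)\ge0$ for all $\theta$; and $x(\underline{\theta})\ge x^e(\underline{\theta})$ almost surely. A revenue-maximizing mechanism for this problem gives each type $\theta$ the allocation \[ x^*(\theta)=\arg\max_{x\in[x^e(\underline{\theta}),\overline{x}]}\Big\{v(x)+x\Big(\theta-\frac{1-F(\theta)}{f(\theta)}\Big)\Big\}, \] under which each type consumes its entire allocation $x^*(\theta)$, and charges \[ p(\theta)=u(x^*(\theta),\theta)-\int_{\underline{\theta}}^{\theta}x^*(z)\,dz. \] The resulting optimal seller payoff is denoted $\pi^e(F)$.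
   Context: Fix $\underline{\theta}<\overline{\theta}$ and $0<\underline{x}<\overline{x}$. The buyer's private type $\theta\in[\underline{\theta},\overline{\theta}]$ has CDF $F$ with density $f$. (A1): $v:[0,\overline{x}]\to\mathbb{R}$ strictly concave, continuously differentiable, $v(0)=0$. For an allocation $x$, $u(x,\theta)=\max_{0\le x'\le x}[v(x')+\theta x']$ (free disposal; the buyer consumes the maximizer $x'$). $x^e(\theta)$ is the unique maximizer of $v(x')+\theta x'$ over $[0,\overline{x}]$. (A2): $0<m\le f\le M$ for constants $m,M$, and $\theta-\frac{1-F(\theta)}{f(\theta)}$ strictly increasing. No assumption relating $\underline{x}$ and $x^e(\underline{\theta})$, nor nonnegativity of virtual surplus, is imposed. *)

theory Defs
  imports "HOL-Probability.Probability"
begin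

definition strictly_concave_on :: "real set \<Rightarrow> (real \<Rightarrow> real) \<Rightarrow> bool" where
  "strictly_concave_on S v \<longleftrightarrow>
     (\<forall>x\<in>S. \<forall>y\<in>S. \<forall>t. x \<noteq> y \<and> 0 < t \<and> t < 1 \<longrightarrow>
        t * v x + (1 - t) * v y < v (t * x + (1 - t) * y))"

text \<open>Utility with free disposal: u(x,theta) = max over x' in [0,x] of v x' + theta x'.\<close>
definition util :: "(real \<Rightarrow> real) \<Rightarrow> real \<Rightarrow> real \<Rightarrow> real" where
  "util v x \<theta> = Sup ((\<lambda>x'. v x' + \<theta> * x') ` {0..x})"

definition xeff :: "(real \<Rightarrow> real) \<Rightarrow> real \<Rightarrow> real \<Rightarrow> real" where
  "xeff v xh \<theta> = (THE x. x \<in> {0..xh} \<and> (\<forall>y\<in>{0..xh}. v y + \<theta> * y \<le> v x + \<theta> * x))"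

definition EU :: "(real \<Rightarrow> real) \<Rightarrow> real measure \<Rightarrow> real \<Rightarrow> real" where
  "EU v X \<theta> = (\<integral>a. util v a \<theta> \<partial>X)"

definition feasible ::
  "real \<Rightarrow> real \<Rightarrow> real \<Rightarrow> (real \<Rightarrow> real) \<Rightarrow> (real \<Rightarrow> real measure) \<Rightarrow> (real \<Rightarrow> real) \<Rightarrow> bool" where
  "feasible tlo thi xh v X p \<longleftrightarrow>
     (\<forall>\<theta>\<in>{tlo..thi}. prob_space (X \<theta>) \<and> sets (X \<theta>) = sets borel \<and>
                    (AE a in X \<theta>. a \<in> {0..xh})) \<and>
     (\<forall>\<theta>\<in>{tlo..thi}. \<forall>\<theta>'\<in>{tlo..thi}. EU v (X \<theta>) \<theta> - p \<theta> \<ge> EU v (X \<theta>') \<theta> - p \<theta>') \<and>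
     (\<forall>\<theta>\<in>{tlo..thi}. EU v (X \<theta>) \<theta> - p \<theta> \<ge> 0) \<and>
     (AE a in X tlo. xeff v xh tlo \<le> a)"

definition revenue :: "real \<Rightarrow> real \<Rightarrow> (real \<Rightarrow> real) \<Rightarrow> (real \<Rightarrow> real) \<Rightarrow> real" where
  "revenue tlo thi f p = integral {tlo..thi} (\<lambda>\<theta>. p \<theta> * f \<theta>)"

end

theory Submission
  imports Defs
begin

text \<open>Myerson's envelope argument. In a feasible mechanism let \<open>c \<theta>\<close> be the expected quantity
  that type \<open>\<theta>\<close> actually consumes, \<open>E[min a (x\<^sup>e \<theta>)]\<close>. Incentive compatibility makes the rent
  \<open>U \<theta>\<close> a convex function with subgradient \<open>c\<close>, so \<open>c\<close> is nondecreasing and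
  \<open>U \<theta> = U \<theta>\<^sub>l\<^sub>o + \<integral> c\<close>; the constraint on the lowest type gives \<open>c \<ge> x\<^sup>e \<theta>\<^sub>l\<^sub>o\<close>.
  By Jensen's inequality the expected utility is at most \<open>v (c \<theta>) + \<theta> c \<theta>\<close>, and integrating
  by parts bounds the revenue by the expected virtual surplus \<open>\<integral> (v c + c \<phi>) f\<close> minus
  \<open>U \<theta>\<^sub>l\<^sub>o \<ge> 0\<close>. The pointwise maximizer \<open>x\<^sup>*\<close> of the virtual surplus over
  \<open>[x\<^sup>e \<theta>\<^sub>l\<^sub>o, x\<^sub>h]\<close> is nondecreasing because \<open>\<phi>\<close> is, and lies below \<open>x\<^sup>e\<close> because
  \<open>\<phi> \<theta> \<le> \<theta>\<close>, so it is consumed in full; with the stated payments the envelope formula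
  holds with equality, which gives incentive compatibility and attains the bound.\<close>

lemma strictly_concave_onD:
  "strictly_concave_on S g \<Longrightarrow> x \<in> S \<Longrightarrow> y \<in> S \<Longrightarrow> x \<noteq> y \<Longrightarrow> 0 < t \<Longrightarrow> t < 1 \<Longrightarrow>
    t * g x + (1 - t) * g y < g (t * x + (1 - t) * y)"
  unfolding strictly_concave_on_def by blast

lemma strictly_concave_on_subset:
  "strictly_concave_on S g \<Longrightarrow> T \<subseteq> S \<Longrightarrow> strictly_concave_on T g"
  unfolding strictly_concave_on_def by blast

lemma strictly_concave_on_add_linear:
  "strictly_concave_on S g \<Longrightarrow> strictly_concave_on S (\<lambda>x. g x + c * x)"
  unfolding strictly_concave_on_def by (auto simp: algebra_simps)

lemma strictly_concave_on_imp_concave_on: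
  assumes "strictly_concave_on S g" "convex S"
  shows "concave_on S g"
  unfolding concave_on_def
proof (rule convex_onI[OF _ assms(2)])
  fix t :: real and x y assume t: "0 < t" "t < 1" and xy: "x \<in> S" "y \<in> S"
  show "- g ((1 - t) *\<^sub>R x + t *\<^sub>R y) \<le> (1 - t) * - g x + t * - g y"
  proof (cases "x = y")
    case False
    then show ?thesis
      using strictly_concave_onD[OF assms(1) xy False, of "1 - t"] t by simp
  qed (simp add: algebra_simps)
qed

lemma strictly_concave_argmax_segment_less:
  fixes g :: "real \<Rightarrow> real"
  assumes g: "strictly_concave_on S g" and "convex S"
    and max: "is_arg_max g (\<lambda>y. y \<in> S) x" and z: "z \<in> S"
    and y: "y \<in> closed_segment x z" "y \<noteq> z"
  shows "g z < g y"
proof -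
  have x: "x \<in> S" and le_max: "\<And>w. w \<in> S \<Longrightarrow> g w \<le> g x"
    using max by (auto simp: is_arg_max_linorder)
  have "x \<noteq> z" using y by auto
  obtain u where u: "0 \<le> u" "u \<le> 1" "y = (1 - u) * x + u * z"
    using y(1) by (auto simp: in_segment)
  show ?thesis
  proof (cases "y = x")
    case True
    define m where "m = (1/2) * x + (1 - 1/2) * z"
    have "m \<in> S" using convexD[OF \<open>convex S\<close> x z, of "1/2" "1/2"] by (simp add: m_def)
    have "(1/2) * g x + (1 - 1/2) * g z < g m"
      using strictly_concave_onD[OF g x z \<open>x \<noteq> z\<close>, of "1/2"] by (simp add: m_def)
    with le_max[OF \<open>m \<in> S\<close>] True show ?thesis by simp
  next
    case False
    with u y(2) have "0 < 1 - u" "1 - u < 1" by (auto simp: less_le)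
    then have "(1 - u) * g x + (1 - (1 - u)) * g z < g y"
      using strictly_concave_onD[OF g x z \<open>x \<noteq> z\<close>, of "1 - u"] u(3) by simp
    moreover have "(1 - u) * g z \<le> (1 - u) * g x"
      using le_max[OF z] u by (intro mult_left_mono) auto
    ultimately show ?thesis by (simp add: algebra_simps)
  qed
qed

lemma strictly_concave_argmax_less:
  fixes g :: "real \<Rightarrow> real"
  assumes "strictly_concave_on S g" "convex S" "is_arg_max g (\<lambda>y. y \<in> S) x" "z \<in> S" "z \<noteq> x"
  shows "g z < g x"
  using strictly_concave_argmax_segment_less[OF assms(1-4), of x] assms(5) by simp

lemma is_arg_max_the_strictly_concave:
  fixes g :: "real \<Rightarrow> real"
  assumes "strictly_concave_on S g" "continuous_on S g" "compact S" "convex S" "S \<noteq> {}"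
  shows "is_arg_max g (\<lambda>y. y \<in> S) (THE x. x \<in> S \<and> (\<forall>y\<in>S. g y \<le> g x))"
proof -
  obtain x where "x \<in> S" "\<forall>y\<in>S. g y \<le> g x"
    using continuous_attains_sup[OF assms(3,5,2)] by blast
  then have max: "is_arg_max g (\<lambda>y. y \<in> S) x" by (simp add: is_arg_max_linorder)
  have "(THE x. x \<in> S \<and> (\<forall>y\<in>S. g y \<le> g x)) = x"
  proof (rule the_equality)
    fix x' assume "x' \<in> S \<and> (\<forall>y\<in>S. g y \<le> g x')"
    then show "x' = x"
      using strictly_concave_argmax_less[OF assms(1,4) max, of x'] \<open>x \<in> S\<close> by force
  qed (use \<open>x \<in> S\<close> \<open>\<forall>y\<in>S. g y \<le> g x\<close> in blast)
  with max show ?thesis by simp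
qed

lemma argmax_linear_perturbation_mono_on:
  fixes g :: "real \<Rightarrow> real" and c :: "'a::linorder \<Rightarrow> real"
  assumes max: "\<And>i. i \<in> A \<Longrightarrow> is_arg_max (\<lambda>y. g y + c i * y) P (x i)"
    and c: "strict_mono_on A c"
  shows "mono_on A x"
proof (rule mono_onI)
  fix i j assume ij: "i \<in> A" "j \<in> A" "i \<le> j"
  show "x i \<le> x j"
  proof (cases "i = j")
    case False
    then have "c i < c j" using c ij by (auto simp: strict_mono_on_def)
    have "g (x j) + c i * x j \<le> g (x i) + c i * x i" "g (x i) + c j * x i \<le> g (x j) + c j * x j"
      using max[OF ij(1)] max[OF ij(2)] by (auto simp: is_arg_max_linorder)
    then have "0 \<le> (c j - c i) * (x j - x i)" by (simp add: algebra_simps)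
    with \<open>c i < c j\<close> show ?thesis by (simp add: zero_le_mult_iff)
  qed simp
qed

lemma increments_dominated_imp_eq:
  fixes D G :: "real \<Rightarrow> real"
  assumes "a \<le> b" and G: "mono_on {a..b} G"
    and dom: "\<And>s t. a \<le> s \<Longrightarrow> s \<le> t \<Longrightarrow> t \<le> b \<Longrightarrow> \<bar>D t - D s\<bar> \<le> (t - s) * (G t - G s)"
  shows "D b = D a"
proof (rule ccontr)
  assume "D b \<noteq> D a"
  then have d: "0 < \<bar>D b - D a\<bar>" by simp
  have "0 \<le> (b - a) * (G b - G a)"
    using G \<open>a \<le> b\<close> by (auto simp: mono_on_def)
  moreover obtain n :: nat where n: "(b - a) * (G b - G a) / \<bar>D b - D a\<bar> < n"
    using reals_Archimedean2 by blast
  ultimately have "0 < n" using d by (smt (verit) divide_nonneg_pos of_nat_0_less_iff)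
  define h where "h = (b - a) / n"
  define p where "p k = a + real k * h" for k
  have "0 \<le> h" using \<open>a \<le> b\<close> by (simp add: h_def)
  have p_end: "p 0 = a" "p n = b" using \<open>0 < n\<close> by (simp_all add: p_def h_def)
  have p_in: "a \<le> p k \<and> p k \<le> b" if "k \<le> n" for k
  proof -
    have "real k * (b - a) \<le> real n * (b - a)"
      using that \<open>a \<le> b\<close> by (intro mult_right_mono) auto
    then have "real k * (b - a) / n \<le> b - a"
      using \<open>0 < n\<close> by (simp add: divide_le_eq mult.commute)
    then show ?thesis using \<open>a \<le> b\<close> by (simp add: p_def h_def)
  qed
  have "\<bar>D b - D a\<bar> = \<bar>\<Sum>k<n. D (p (Suc k)) - D (p k)\<bar>"
    using sum_lessThan_telescope[of "\<lambda>k. D (p k)"] by (simp add: p_end)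
  also have "\<dots> \<le> (\<Sum>k<n. \<bar>D (p (Suc k)) - D (p k)\<bar>)" by (rule sum_abs)
  also have "\<dots> \<le> (\<Sum>k<n. h * (G (p (Suc k)) - G (p k)))"
  proof (rule sum_mono)
    fix k assume "k \<in> {..<n}"
    then have "a \<le> p k" "p (Suc k) \<le> b" using p_in[of k] p_in[of "Suc k"] by auto
    moreover have "p (Suc k) - p k = h" by (simp add: p_def algebra_simps)
    ultimately show "\<bar>D (p (Suc k)) - D (p k)\<bar> \<le> h * (G (p (Suc k)) - G (p k))"
      using dom[of "p k" "p (Suc k)"] \<open>0 \<le> h\<close> by simp
  qed
  also have "\<dots> = h * (G b - G a)"
    using sum_lessThan_telescope[of "\<lambda>k. G (p k)"] by (simp add: sum_distrib_left[symmetric] p_end)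
  also have "\<dots> < \<bar>D b - D a\<bar>"
    using n d \<open>0 < n\<close> by (simp add: h_def field_simps)
  finally show False by simp
qed

lemma integral_Icc_diff:
  fixes g :: "real \<Rightarrow> real"
  assumes "g integrable_on {a..b}" "a \<le> s" "s \<le> t" "t \<le> b"
  shows "integral {a..t} g - integral {a..s} g = integral {s..t} g"
  using Henstock_Kurzweil_Integration.integral_combine[of a s t g]
    integrable_on_subinterval[OF assms(1), of a t] assms by auto

lemma integral_between_const_bounds:
  fixes g :: "real \<Rightarrow> real"
  assumes "g integrable_on {s..t}" "s \<le> t" "\<And>x. x \<in> {s..t} \<Longrightarrow> l \<le> g x \<and> g x \<le> u"
  shows "(t - s) * l \<le> integral {s..t} g \<and> integral {s..t} g \<le> (t - s) * u"
proof -
  have "integral {s..t} (\<lambda>x. l) \<le> integral {s..t} g" "integral {s..t} g \<le> integral {s..t} (\<lambda>x. u)"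
    by (rule integral_le; use assms in auto)+
  then show ?thesis using assms(2) by simp
qed

lemma indefinite_integral_abs_bound:
  fixes g :: "real \<Rightarrow> real"
  assumes "g integrable_on {a..b}" "\<And>x. x \<in> {a..b} \<Longrightarrow> \<bar>g x\<bar> \<le> K" "x \<in> {a..b}"
  shows "\<bar>integral {a..x} g\<bar> \<le> K * (x - a)"
proof -
  have "(x - a) * - K \<le> integral {a..x} g \<and> integral {a..x} g \<le> (x - a) * K"
    using assms(2,3) by (intro integral_between_const_bounds integrable_on_subinterval[OF assms(1)])
      (force simp: abs_le_iff)+
  then show ?thesis by (simp add: abs_le_iff mult.commute)
qed

lemma indefinite_integral_mono_on:
  fixes f :: "real \<Rightarrow> real"
  assumes "f integrable_on {a..b}" "\<And>x. x \<in> {a..b} \<Longrightarrow> 0 \<le> f x"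
  shows "mono_on {a..b} (\<lambda>x. integral {a..x} f)"
proof (rule mono_onI)
  fix r s assume "r \<in> {a..b}" "s \<in> {a..b}" "r \<le> s"
  then show "integral {a..r} f \<le> integral {a..s} f"
    using integral_Icc_diff[OF assms(1), of r s] assms(2)
      integral_nonneg[OF integrable_on_subinterval[OF assms(1)], of r s] by auto
qed

lemma mono_subgradient_has_integral:
  fixes U g :: "real \<Rightarrow> real"
  assumes "a \<le> b" and g: "mono_on {a..b} g"
    and sub: "\<And>s t. s \<in> {a..b} \<Longrightarrow> t \<in> {a..b} \<Longrightarrow> U s + (t - s) * g s \<le> U t"
  shows "(g has_integral U b - U a) {a..b}"
proof -
  have g_int: "g integrable_on {a..b}" by (rule integrable_on_mono_on[OF g])
  define D where "D t = U t - integral {a..t} g" for t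
  have "D b = D a"
  proof (rule increments_dominated_imp_eq[OF \<open>a \<le> b\<close> g])
    fix s t assume st: "a \<le> s" "s \<le> t" "t \<le> b"
    have "(t - s) * g s \<le> integral {s..t} g \<and> integral {s..t} g \<le> (t - s) * g t"
      using st g integrable_on_subinterval[OF g_int, of s t]
      by (intro integral_between_const_bounds) (auto simp: mono_on_def)
    moreover have "U s + (t - s) * g s \<le> U t" "U t + (s - t) * g t \<le> U s"
      using sub st by auto
    ultimately show "\<bar>D t - D s\<bar> \<le> (t - s) * (g t - g s)"
      using integral_Icc_diff[OF g_int st]
      unfolding D_def abs_le_iff left_diff_distrib right_diff_distrib by linarith
  qed
  then show ?thesis using g_int by (simp add: D_def has_integral_iff)
qed

lemma bounded_measurable_mult_integrable:
  fixes h f :: "real \<Rightarrow> real"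
  assumes "h \<in> borel_measurable (lebesgue_on {a..b})" "\<And>x. x \<in> {a..b} \<Longrightarrow> \<bar>h x\<bar> \<le> B"
    and "f absolutely_integrable_on {a..b}"
  shows "(\<lambda>x. h x * f x) integrable_on {a..b}"
proof -
  have "bounded (h ` {a..b})" unfolding bounded_real using assms(2) by (intro exI[of _ B]) auto
  then show ?thesis
    using absolutely_integrable_bounded_measurable_product_real[OF assms(1) _ _ assms(3)]
      set_lebesgue_integral_eq_integral(1) by auto
qed

lemma integrable_by_parts_indefinite:
  fixes g f :: "real \<Rightarrow> real"
  assumes g: "g integrable_on {a..b}" "\<And>x. x \<in> {a..b} \<Longrightarrow> \<bar>g x\<bar> \<le> K"
    and f: "f integrable_on {a..b}" "\<And>x. x \<in> {a..b} \<Longrightarrow> 0 \<le> f x"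
  shows "(\<lambda>x. integral {a..x} g * f x) integrable_on {a..b}"
    "(\<lambda>x. g x * integral {a..x} f) integrable_on {a..b}"
proof -
  have "\<bar>integral {a..x} g\<bar> \<le> K * (b - a)" if "x \<in> {a..b}" for x
    using indefinite_integral_abs_bound[OF g that] g(2)[of a] that
    by (smt (verit, ccfv_SIG) atLeastAtMost_iff mult_left_mono)
  then show "(\<lambda>x. integral {a..x} g * f x) integrable_on {a..b}"
    using f by (intro bounded_measurable_mult_integrable continuous_imp_measurable_on_sets_lebesgue
        indefinite_integral_continuous_1 g(1) nonnegative_absolutely_integrable_1) auto
  show "(\<lambda>x. g x * integral {a..x} f) integrable_on {a..b}"
    using g by (intro bounded_measurable_mult_integrable integrable_imp_measurable
        absolutely_integrable_continuous_real indefinite_integral_continuous_1 f(1))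
qed

lemma by_parts_increment_eq:
  fixes g f W F :: "real \<Rightarrow> real"
  assumes "s \<le> t" "g integrable_on {s..t}" "f integrable_on {s..t}"
    and "W t - W s = integral {s..t} g" "F t - F s = integral {s..t} f"
    and Wf: "(\<lambda>x. W x * f x) integrable_on {s..t}" and gF: "(\<lambda>x. g x * F x) integrable_on {s..t}"
  shows "integral {s..t} (\<lambda>x. W x * f x) + integral {s..t} (\<lambda>x. g x * F x) - (W t * F t - W s * F s)
    = integral {s..t} (\<lambda>x. (W x - W s) * f x) - integral {s..t} (\<lambda>x. g x * (F t - F x))"
proof -
  have "integral {s..t} (\<lambda>x. (W x - W s) * f x) = integral {s..t} (\<lambda>x. W x * f x) - W s * (F t - F s)"
    using integral_diff[OF Wf integrable_on_mult_right[OF assms(3), of "W s"]] assms(5)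
    by (simp add: left_diff_distrib)
  moreover have "integral {s..t} (\<lambda>x. g x * (F t - F x)) = F t * (W t - W s) - integral {s..t} (\<lambda>x. g x * F x)"
    using integral_diff[OF integrable_on_mult_left[OF assms(2), of "F t"] gF] assms(4)
    by (simp add: right_diff_distrib)
  ultimately show ?thesis by (simp add: algebra_simps)
qed

lemma abs_integral_mult_le:
  fixes h f :: "real \<Rightarrow> real"
  assumes "(\<lambda>x. h x * f x) integrable_on S" "f integrable_on S"
    and "\<And>x. x \<in> S \<Longrightarrow> \<bar>h x\<bar> \<le> B" "\<And>x. x \<in> S \<Longrightarrow> 0 \<le> f x"
  shows "\<bar>integral S (\<lambda>x. h x * f x)\<bar> \<le> B * integral S f"
proof -
  have "norm (integral S (\<lambda>x. h x * f x)) \<le> integral S (\<lambda>x. B * f x)"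
    using assms by (intro integral_norm_bound_integral integrable_on_mult_right)
      (auto simp: abs_mult mult_right_mono)
  then show ?thesis by simp
qed

lemma by_parts_increment_bound:
  fixes g f W F :: "real \<Rightarrow> real"
  assumes "s \<le> t"
    and g: "g integrable_on {s..t}" "\<And>x. x \<in> {s..t} \<Longrightarrow> \<bar>g x\<bar> \<le> K"
    and f: "f integrable_on {s..t}" "\<And>x. x \<in> {s..t} \<Longrightarrow> 0 \<le> f x"
    and W: "\<And>x. x \<in> {s..t} \<Longrightarrow> W x - W s = integral {s..x} g"
    and F: "\<And>x. x \<in> {s..t} \<Longrightarrow> F x - F s = integral {s..x} f"
    and Wf: "(\<lambda>x. W x * f x) integrable_on {s..t}" and gF: "(\<lambda>x. g x * F x) integrable_on {s..t}"
  shows "\<bar>integral {s..t} (\<lambda>x. W x * f x) + integral {s..t} (\<lambda>x. g x * F x) - (W t * F t - W s * F s)\<bar>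
    \<le> (t - s) * (2 * K * F t - 2 * K * F s)"
proof -
  have "0 \<le> K" using g(2)[of s] \<open>s \<le> t\<close> by auto
  have W_bound: "\<bar>W x - W s\<bar> \<le> K * (t - s)" if "x \<in> {s..t}" for x
    using indefinite_integral_abs_bound[OF g that] W[OF that] mult_left_mono[of "x - s" "t - s" K]
      that \<open>0 \<le> K\<close> by auto
  have F_mono: "F s \<le> F x \<and> F x \<le> F t" if "x \<in> {s..t}" for x
    using mono_onD[OF indefinite_integral_mono_on[OF f]] that F[OF that] F[of t] \<open>s \<le> t\<close> by force
  define X where "X = integral {s..t} (\<lambda>x. (W x - W s) * f x)"
  define Y where "Y = integral {s..t} (\<lambda>x. g x * (F t - F x))"
  have "\<bar>X\<bar> \<le> K * (t - s) * integral {s..t} f"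
    unfolding X_def using W_bound f
    by (intro abs_integral_mult_le integrable_diff[OF Wf integrable_on_mult_right[OF f(1)], of "W s",
        unfolded left_diff_distrib[symmetric]])
  moreover have "\<bar>Y\<bar> \<le> K * (F t - F s) * (t - s)"
    unfolding Y_def
  proof (rule indefinite_integral_abs_bound)
    show "(\<lambda>x. g x * (F t - F x)) integrable_on {s..t}"
      using integrable_diff[OF integrable_on_mult_left[OF g(1), of "F t"] gF]
      by (simp add: right_diff_distrib)
    fix x assume x: "x \<in> {s..t}"
    show "\<bar>g x * (F t - F x)\<bar> \<le> K * (F t - F s)"
      using mult_mono[OF g(2)[OF x], of "F t - F x" "F t - F s"] F_mono[OF x] \<open>0 \<le> K\<close>
      by (simp add: abs_mult)
  qed (use \<open>s \<le> t\<close> in auto)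
  moreover have "W t - W s = integral {s..t} g" "F t - F s = integral {s..t} f"
    using W F \<open>s \<le> t\<close> by auto
  moreover have "\<bar>integral {s..t} (\<lambda>x. W x * f x) + integral {s..t} (\<lambda>x. g x * F x) - (W t * F t - W s * F s)\<bar>
      = \<bar>X - Y\<bar>"
    using by_parts_increment_eq[OF \<open>s \<le> t\<close> g(1) f(1) calculation(3,4) Wf gF] by (simp add: X_def Y_def)
  ultimately show ?thesis
    using abs_triangle_ineq4[of X Y] by (simp add: algebra_simps)
qed

lemma integral_by_parts_indefinite:
  fixes g f :: "real \<Rightarrow> real"
  assumes "a \<le> b"
    and g: "g integrable_on {a..b}" "\<And>x. x \<in> {a..b} \<Longrightarrow> \<bar>g x\<bar> \<le> K"
    and f: "f integrable_on {a..b}" "\<And>x. x \<in> {a..b} \<Longrightarrow> 0 \<le> f x"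
  shows "integral {a..b} (\<lambda>x. integral {a..x} g * f x) + integral {a..b} (\<lambda>x. g x * integral {a..x} f)
    = integral {a..b} g * integral {a..b} f"
proof -
  define W where "W x = integral {a..x} g" for x
  define F where "F x = integral {a..x} f" for x
  define D where "D x = integral {a..x} (\<lambda>y. W y * f y) + integral {a..x} (\<lambda>y. g y * F y) - W x * F x" for x
  note Wf = integrable_by_parts_indefinite(1)[OF g f, folded W_def]
  note gF = integrable_by_parts_indefinite(2)[OF g f, folded F_def]
  have "D b = D a"
  proof (rule increments_dominated_imp_eq[OF \<open>a \<le> b\<close>])
    show "mono_on {a..b} (\<lambda>x. 2 * K * F x)"
      using mono_onD[OF indefinite_integral_mono_on[OF f]] g(2)[of a] \<open>a \<le> b\<close>
      by (intro mono_onI mult_left_mono) (auto simp: F_def)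
    fix s t assume st: "a \<le> s" "s \<le> t" "t \<le> b"
    have sub: "{s..t} \<subseteq> {a..b}" using st by auto
    show "\<bar>D t - D s\<bar> \<le> (t - s) * (2 * K * F t - 2 * K * F s)"
      using by_parts_increment_bound[OF \<open>s \<le> t\<close> integrable_on_subinterval[OF g(1) sub] _
          integrable_on_subinterval[OF f(1) sub] _ _ _
          integrable_on_subinterval[OF Wf sub] integrable_on_subinterval[OF gF sub], of K]
        g(2) f(2) sub st integral_Icc_diff[OF g(1)] integral_Icc_diff[OF f(1)]
        integral_Icc_diff[OF Wf st] integral_Icc_diff[OF gF st]
      by (simp add: D_def W_def F_def subset_iff)
  qed
  then show ?thesis by (simp add: D_def W_def F_def)
qed

lemma Sup_real_unbounded_eq:
  fixes X Y :: "real set"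
  assumes "\<not> bdd_above X" "\<not> bdd_above Y"
  shows "Sup X = Sup Y"
proof -
  have "(\<lambda>z. \<forall>x\<in>X. x \<le> z) = (\<lambda>z. False)" "(\<lambda>z. \<forall>y\<in>Y. y \<le> z) = (\<lambda>z. False)"
    using assms by (auto simp: bdd_above_def fun_eq_iff)
  then show ?thesis unfolding Sup_real_def by simp
qed

text \<open>The utility is monotone in the allocation as long as the consumption values stay bounded,
  and it is the junk value of an unbounded supremum beyond that point; so it is measurable
  without any assumption on \<open>v\<close>.\<close>

lemma borel_measurable_util: "(\<lambda>a. util v a \<theta>) \<in> borel_measurable borel"
proof -
  define S where "S a = (\<lambda>x. v x + \<theta> * x) ` {0..a}" for a
  define B where "B = {a. 0 \<le> a \<and> bdd_above (S a)}"
  have S_mono: "S a \<subseteq> S b" if "a \<le> b" for a b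
    using that by (auto simp: S_def)
  have "is_interval B" "is_interval ({0..} - B)"
    unfolding is_interval_1 B_def by (auto intro: bdd_above_mono[OF _ S_mono])
  then have B_sets: "B \<in> sets borel" "{0..} - B \<in> sets borel"
    by (simp_all add: real_interval_borel_measurable)
  show ?thesis
    unfolding util_def S_def[symmetric]
  proof (rule borel_measurable_piecewise_mono[of "{{..<0}, B, {0..} - B}"])
    fix C assume C: "C \<in> {{..<0}, B, {0..} - B}"
    have "mono_on {..<0} (\<lambda>a. Sup (S a))"
      by (intro mono_onI) (simp add: S_def)
    moreover have "mono_on B (\<lambda>a. Sup (S a))"
      by (intro mono_onI cSup_subset_mono S_mono) (auto simp: B_def S_def)
    moreover have "mono_on ({0..} - B) (\<lambda>a. Sup (S a))"
      by (intro mono_onI eq_refl Sup_real_unbounded_eq) (auto simp: B_def)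
    ultimately show "mono_on C (\<lambda>a. Sup (S a))" using C by blast
  qed (use B_sets in auto)
qed

lemma EU_return: "EU v (return borel x) \<theta> = util v x \<theta>"
  unfolding EU_def by (rule integral_return) (simp_all add: borel_measurable_util)

lemma borel_measurable_continuous_on_Icc_comp:
  fixes v :: "real \<Rightarrow> real" and c :: "'a \<Rightarrow> real"
  assumes "continuous_on {lo..hi} v" "c \<in> borel_measurable M" "\<And>x. x \<in> space M \<Longrightarrow> c x \<in> {lo..hi}"
  shows "(\<lambda>x. v (c x)) \<in> borel_measurable M"
proof -
  have "(\<lambda>y. indicator {lo..hi} y *\<^sub>R v y) \<in> borel_measurable borel"
    by (rule borel_measurable_continuous_on_indicator) (simp_all add: assms(1))
  then have "(\<lambda>x. indicator {lo..hi} (c x) *\<^sub>R v (c x)) \<in> borel_measurable M"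
    using measurable_compose[OF assms(2)] by blast
  then show ?thesis
    by (rule measurable_cong[THEN iffD1, rotated]) (use assms(3) in \<open>auto simp: indicator_def\<close>)
qed

lemma (in prob_space) AE_eq_if_expectation_eq_lower_bound:
  fixes c :: "'a \<Rightarrow> real"
  assumes "integrable M c" "AE x in M. a \<le> c x" "expectation c = a"
  shows "AE x in M. c x = a"
proof -
  have "expectation (\<lambda>x. c x - a) = 0"
    using assms(1,3) prob_space by simp
  then have "AE x in M. c x - a = 0"
    using integral_nonneg_eq_0_iff_AE[of M "\<lambda>x. c x - a"] assms(1,2) by simp
  then show ?thesis by simp
qed

lemma concave_on_Icc_below_tangent:
  fixes v :: "real \<Rightarrow> real"
  assumes "concave_on {lo..hi} v" "\<mu> \<in> {lo<..<hi}" "(v has_real_derivative d) (at \<mu>)" "y \<in> {lo..hi}"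
  shows "v y \<le> v \<mu> + d * (y - \<mu>)"
proof -
  have "((\<lambda>x. - v x) has_real_derivative - d) (at \<mu> within {lo..hi})"
    using DERIV_minus[OF assms(3)] by (rule has_field_derivative_at_within)
  moreover have "convex_on {lo..hi} (\<lambda>x. - v x)" "\<mu> \<in> interior {lo..hi}"
    using assms(1,2) by (simp_all add: concave_on_def)
  ultimately have "- d * (y - \<mu>) \<le> - v y - - v \<mu>"
    using convex_on_imp_above_tangent[OF _ connected_Icc _ assms(4)] by blast
  then show ?thesis by simp
qed

text \<open>Jensen's inequality on a closed interval; the library version needs an open one. At an
  endpoint the expectation forces the variable to be almost surely constant, and in the interior
  the tangent line is a supporting line.\<close>

lemma (in prob_space) jensen_concave_Icc:
  fixes v v' :: "real \<Rightarrow> real" and c :: "'a \<Rightarrow> real"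
  assumes v: "concave_on {lo..hi} v" "continuous_on {lo..hi} v"
    "\<And>x. x \<in> {lo<..<hi} \<Longrightarrow> (v has_real_derivative v' x) (at x)"
    and c: "c \<in> borel_measurable M" "\<And>x. x \<in> space M \<Longrightarrow> c x \<in> {lo..hi}"
  shows "expectation (\<lambda>x. v (c x)) \<le> v (expectation c)"
proof -
  have "bounded (v ` {lo..hi})"
    by (rule compact_imp_bounded[OF compact_continuous_image[OF v(2) compact_Icc]])
  then obtain B where B: "\<forall>y\<in>{lo..hi}. \<bar>v y\<bar> \<le> B"
    by (auto simp: bounded_real)
  have c_int: "integrable M c"
    using c by (intro integrable_const_bound[where B="\<bar>lo\<bar> + \<bar>hi\<bar>"] AE_I2) fastforce+
  have vc_meas: "(\<lambda>x. v (c x)) \<in> borel_measurable M"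
    by (rule borel_measurable_continuous_on_Icc_comp[OF v(2) c])
  then have vc_int: "integrable M (\<lambda>x. v (c x))"
    using B c(2) by (intro integrable_const_bound[where B=B]) auto
  define \<mu> where "\<mu> = expectation c"
  have "lo \<le> \<mu>" "\<mu> \<le> hi"
    using c(2) unfolding \<mu>_def by (auto intro!: integral_ge_const integral_le_const c_int)
  then consider "\<mu> \<in> {lo<..<hi}" | "\<mu> = lo \<or> \<mu> = hi" by fastforce
  then show ?thesis
  proof cases
    case 1
    have "expectation (\<lambda>x. v (c x)) \<le> expectation (\<lambda>x. v \<mu> + v' \<mu> * (c x - \<mu>))"
      using concave_on_Icc_below_tangent[OF v(1) 1 v(3)[OF 1]] c(2) c_int
      by (intro integral_mono[OF vc_int]) auto
    also have "\<dots> = v \<mu>"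
      using c_int prob_space by (simp add: \<mu>_def)
    finally show ?thesis by (simp add: \<mu>_def)
  next
    case 2
    then have "AE x in M. c x = \<mu>"
      using AE_eq_if_expectation_eq_lower_bound[OF c_int, of lo]
        AE_eq_if_expectation_eq_lower_bound[of "\<lambda>x. - c x" "- hi"] c c_int
      by (auto simp: \<mu>_def)
    then have "expectation (\<lambda>x. v (c x)) = expectation (\<lambda>x. v \<mu>)"
      by (intro integral_cong_AE vc_meas) auto
    then show ?thesis using prob_space by (simp add: \<mu>_def)
  qed
qed

locale screening =
  fixes tlo thi xh :: real and v v' F f :: "real \<Rightarrow> real"
  assumes tlo_le_thi: "tlo \<le> thi" and xh_nonneg: "0 \<le> xh"
    and v_strictly_concave: "strictly_concave_on {0..xh} v"
    and v_deriv: "\<And>x. x \<in> {0..xh} \<Longrightarrow> (v has_real_derivative v' x) (at x within {0..xh})"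
    and f_integrable: "f integrable_on {tlo..thi}"
    and F_integral: "\<And>\<theta>. \<theta> \<in> {tlo..thi} \<Longrightarrow> F \<theta> = integral {tlo..\<theta>} f"
    and F_thi: "F thi = 1"
    and f_pos: "\<And>\<theta>. \<theta> \<in> {tlo..thi} \<Longrightarrow> 0 < f \<theta>"
    and virtual_value_strict_mono: "strict_mono_on {tlo..thi} (\<lambda>\<theta>. \<theta> - (1 - F \<theta>) / f \<theta>)"
begin

abbreviation xe :: "real \<Rightarrow> real" where
  "xe \<equiv> xeff v xh"

definition virtual_value :: "real \<Rightarrow> real" where
  "virtual_value \<theta> = \<theta> - (1 - F \<theta>) / f \<theta>"

definition xopt :: "real \<Rightarrow> real" where
  "xopt \<theta> = (THE x. x \<in> {xe tlo..xh} \<and>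
     (\<forall>y\<in>{xe tlo..xh}. v y + y * virtual_value \<theta> \<le> v x + x * virtual_value \<theta>))"

definition payment :: "real \<Rightarrow> real" where
  "payment \<theta> = util v (xopt \<theta>) \<theta> - integral {tlo..\<theta>} xopt"

definition expected_virtual_surplus :: "(real \<Rightarrow> real) \<Rightarrow> real" where
  "expected_virtual_surplus g = integral {tlo..thi} (\<lambda>\<theta>. (v (g \<theta>) + g \<theta> * virtual_value \<theta>) * f \<theta>)"

lemma v_continuous: "continuous_on {0..xh} v"
  using v_deriv by (meson continuous_on_eq_continuous_within DERIV_continuous)

lemma v_bounded: obtains B where "\<forall>x\<in>{0..xh}. \<bar>v x\<bar> \<le> B"
proof -
  have "bounded (v ` {0..xh})"
    by (rule compact_imp_bounded[OF compact_continuous_image[OF v_continuous compact_Icc]])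
  then show ?thesis using that by (auto simp: bounded_real)
qed

lemma is_arg_max_the_linear:
  assumes "0 \<le> lo" "lo \<le> hi" "hi \<le> xh"
  shows "is_arg_max (\<lambda>y. v y + c * y) (\<lambda>y. y \<in> {lo..hi})
    (THE x. x \<in> {lo..hi} \<and> (\<forall>y\<in>{lo..hi}. v y + c * y \<le> v x + c * x))"
proof (rule is_arg_max_the_strictly_concave)
  show "strictly_concave_on {lo..hi} (\<lambda>y. v y + c * y)"
    using assms by (intro strictly_concave_on_add_linear strictly_concave_on_subset[OF v_strictly_concave]) auto
  show "continuous_on {lo..hi} (\<lambda>y. v y + c * y)"
    using assms by (intro continuous_intros continuous_on_subset[OF v_continuous]) auto
qed (use assms in auto)

lemma xe_argmax: "is_arg_max (\<lambda>y. v y + \<theta> * y) (\<lambda>y. y \<in> {0..xh}) (xe \<theta>)"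
  unfolding xeff_def using is_arg_max_the_linear[of 0 xh \<theta>] xh_nonneg by simp

lemma xe_range: "xe \<theta> \<in> {0..xh}"
  using xe_argmax by (simp add: is_arg_max_linorder)

lemma xe_mono: "mono xe"
  using xe_argmax by (intro argmax_linear_perturbation_mono_on[where c="\<lambda>\<theta>. \<theta>"]) (auto simp: strict_mono_on_def)

lemma xopt_argmax: "is_arg_max (\<lambda>y. v y + virtual_value \<theta> * y) (\<lambda>y. y \<in> {xe tlo..xh}) (xopt \<theta>)"
proof -
  have "xopt \<theta> = (THE x. x \<in> {xe tlo..xh} \<and>
      (\<forall>y\<in>{xe tlo..xh}. v y + virtual_value \<theta> * y \<le> v x + virtual_value \<theta> * x))"
    unfolding xopt_def by (simp only: mult.commute)
  then show ?thesis
    using is_arg_max_the_linear[of "xe tlo" xh] xe_range[of tlo] by simp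
qed

lemma xopt_strict_argmax:
  "y \<in> {xe tlo..xh} \<Longrightarrow> y \<noteq> xopt \<theta> \<Longrightarrow>
    v y + virtual_value \<theta> * y < v (xopt \<theta>) + virtual_value \<theta> * xopt \<theta>"
  using xe_range[of tlo]
  by (intro strictly_concave_argmax_less[OF _ _ xopt_argmax])
    (auto intro!: strictly_concave_on_add_linear strictly_concave_on_subset[OF v_strictly_concave])

lemma xopt_range: "xopt \<theta> \<in> {xe tlo..xh}"
  using xopt_argmax by (simp add: is_arg_max_linorder)

lemma xopt_in_Icc: "xopt \<theta> \<in> {0..xh}"
  using xopt_range[of \<theta>] xe_range[of tlo] by auto

lemma xopt_mono: "mono_on {tlo..thi} xopt"
  using virtual_value_strict_mono xopt_argmax unfolding virtual_value_def[abs_def]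
  by (intro argmax_linear_perturbation_mono_on) auto

lemma f_nonneg: "\<theta> \<in> {tlo..thi} \<Longrightarrow> 0 \<le> f \<theta>"
  using f_pos by (simp add: less_imp_le)

lemma F_bounds: "\<theta> \<in> {tlo..thi} \<Longrightarrow> 0 \<le> F \<theta> \<and> F \<theta> \<le> 1"
  using mono_onD[OF indefinite_integral_mono_on[OF f_integrable f_nonneg], of tlo \<theta>]
    mono_onD[OF indefinite_integral_mono_on[OF f_integrable f_nonneg], of \<theta> thi]
    F_integral[of \<theta>] F_integral[of thi] F_thi tlo_le_thi
  by auto

lemma virtual_value_le: "\<theta> \<in> {tlo..thi} \<Longrightarrow> virtual_value \<theta> \<le> \<theta>"
  using divide_nonneg_pos[of "1 - F \<theta>" "f \<theta>"] F_bounds f_pos by (simp add: virtual_value_def)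

lemma xopt_le_xe:
  assumes \<theta>: "\<theta> \<in> {tlo..thi}"
  shows "xopt \<theta> \<le> xe \<theta>"
proof (rule ccontr)
  assume "\<not> xopt \<theta> \<le> xe \<theta>"
  then have "v (xopt \<theta>) + \<theta> * xopt \<theta> < v (xe \<theta>) + \<theta> * xe \<theta>"
    using xopt_range[of \<theta>] xe_range[of tlo]
    by (intro strictly_concave_argmax_less[OF _ _ xe_argmax])
      (auto intro!: strictly_concave_on_add_linear v_strictly_concave)
  moreover have "(\<theta> - virtual_value \<theta>) * xe \<theta> \<le> (\<theta> - virtual_value \<theta>) * xopt \<theta>"
    using \<open>\<not> xopt \<theta> \<le> xe \<theta>\<close> virtual_value_le[OF \<theta>] by (intro mult_left_mono) auto
  moreover have "xe \<theta> \<in> {xe tlo..xh}"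
    using xe_range[of \<theta>] monoD[OF xe_mono, of tlo \<theta>] \<theta> by auto
  then have "v (xe \<theta>) + virtual_value \<theta> * xe \<theta> \<le> v (xopt \<theta>) + virtual_value \<theta> * xopt \<theta>"
    using xopt_argmax[of \<theta>] by (simp add: is_arg_max_linorder)
  ultimately show False by (simp add: algebra_simps)
qed

lemma xopt_fully_consumed:
  assumes "\<theta> \<in> {tlo..thi}" "y \<in> {0..xopt \<theta>}" "y \<noteq> xopt \<theta>"
  shows "v y + \<theta> * y < v (xopt \<theta>) + \<theta> * xopt \<theta>"
  using assms xopt_le_xe[OF assms(1)] xopt_range[of \<theta>] xe_range[of \<theta>] xe_range[of tlo]
  by (intro strictly_concave_argmax_segment_less[OF _ _ xe_argmax])
    (auto intro!: strictly_concave_on_add_linear v_strictly_concave simp: closed_segment_eq_real_ivl)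

lemma min_xe_maximizes:
  assumes "x \<in> {0..xh}" "y \<in> {0..x}"
  shows "v y + \<theta> * y \<le> v (min x (xe \<theta>)) + \<theta> * min x (xe \<theta>)"
proof (cases "x \<le> xe \<theta>")
  case True
  then have "v y + \<theta> * y \<le> v x + \<theta> * x"
    using assms xe_range[of \<theta>]
    by (cases "y = x", simp, intro less_imp_le strictly_concave_argmax_segment_less[OF _ _ xe_argmax])
      (auto intro!: strictly_concave_on_add_linear v_strictly_concave simp: closed_segment_eq_real_ivl)
  with True show ?thesis by simp
next
  case False
  then show ?thesis using xe_argmax[of \<theta>] assms by (auto simp: is_arg_max_linorder)
qed

lemma util_eq:
  assumes "x \<in> {0..xh}"
  shows "util v x \<theta> = v (min x (xe \<theta>)) + \<theta> * min x (xe \<theta>)"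
  unfolding util_def using assms xe_range[of \<theta>] min_xe_maximizes[OF assms]
  by (intro cSup_eq_maximum) auto

lemma util_subgradient:
  assumes "x \<in> {0..xh}"
  shows "util v x \<theta>' + (\<theta> - \<theta>') * min x (xe \<theta>') \<le> util v x \<theta>"
  using min_xe_maximizes[OF assms, of "min x (xe \<theta>')" \<theta>] assms xe_range[of \<theta>']
  unfolding util_eq[OF assms] by (simp add: algebra_simps)

lemma util_bounded: obtains B where "\<forall>x\<in>{0..xh}. \<bar>util v x \<theta>\<bar> \<le> B"
proof -
  obtain Bv where Bv: "\<forall>x\<in>{0..xh}. \<bar>v x\<bar> \<le> Bv" using v_bounded .
  have "\<bar>util v x \<theta>\<bar> \<le> Bv + \<bar>\<theta>\<bar> * xh" if x: "x \<in> {0..xh}" for x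
  proof -
    have m: "min x (xe \<theta>) \<in> {0..xh}" using x xe_range[of \<theta>] by auto
    then have "\<bar>\<theta> * min x (xe \<theta>)\<bar> \<le> \<bar>\<theta>\<bar> * xh" by (auto simp: abs_mult intro: mult_left_mono)
    then show ?thesis unfolding util_eq[OF x] using Bv m by fastforce
  qed
  then show ?thesis using that by blast
qed

lemma min_xe_mono_on: "mono_on S (\<lambda>z. min x (xe z))"
  using monoD[OF xe_mono] by (intro mono_onI min.mono) auto

lemma util_diff_eq_integral:
  assumes "x \<in> {0..xh}" "a \<le> b"
  shows "util v x b - util v x a = integral {a..b} (\<lambda>z. min x (xe z))"
  using util_subgradient[OF assms(1)]
  by (intro integral_unique[symmetric] mono_subgradient_has_integral assms(2) min_xe_mono_on)

lemma xopt_integrable: "xopt integrable_on {tlo..thi}"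
  by (rule integrable_on_mono_on[OF xopt_mono])

lemma util_xopt: "\<theta> \<in> {tlo..thi} \<Longrightarrow> util v (xopt \<theta>) \<theta> = v (xopt \<theta>) + \<theta> * xopt \<theta>"
  using util_eq[of "xopt \<theta>" \<theta>] xopt_le_xe[of \<theta>] xopt_range[of \<theta>] xe_range[of tlo] by auto

text \<open>By the envelope formula the gain from mimicking \<open>\<theta>'\<close> is the integral of
  \<open>min (xopt \<theta>') (xe z) - xopt z\<close> from \<open>\<theta>'\<close> to \<open>\<theta>\<close>, which is nonpositive because \<open>xopt\<close> is
  nondecreasing and below \<open>xe\<close>.\<close>

lemma payment_incentive_compatible:
  assumes \<theta>: "\<theta> \<in> {tlo..thi}" and \<theta>': "\<theta>' \<in> {tlo..thi}"
  shows "util v (xopt \<theta>') \<theta> - payment \<theta>' \<le> util v (xopt \<theta>) \<theta> - payment \<theta>"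
proof -
  define x where "x = xopt \<theta>'"
  have x: "x \<in> {0..xh}" using xopt_in_Icc by (simp add: x_def)
  have "util v x \<theta> - util v x \<theta>' \<le> integral {tlo..\<theta>} xopt - integral {tlo..\<theta>'} xopt"
  proof (cases "\<theta>' \<le> \<theta>")
    case True
    have "util v x \<theta> - util v x \<theta>' = integral {\<theta>'..\<theta>} (\<lambda>z. min x (xe z))"
      by (rule util_diff_eq_integral[OF x True])
    also have "\<dots> \<le> integral {\<theta>'..\<theta>} xopt"
      using True \<theta> \<theta>' mono_onD[OF xopt_mono, of \<theta>']
      by (intro integral_le integrable_on_subinterval[OF xopt_integrable]
          integrable_on_mono_on[OF min_xe_mono_on]) (auto simp: x_def intro: min.coboundedI1)
    also have "\<dots> = integral {tlo..\<theta>} xopt - integral {tlo..\<theta>'} xopt"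
      using True \<theta> \<theta>' by (intro integral_Icc_diff[OF xopt_integrable, symmetric]) auto
    finally show ?thesis .
  next
    case False
    then have "\<theta> \<le> \<theta>'" by simp
    have "integral {tlo..\<theta>'} xopt - integral {tlo..\<theta>} xopt = integral {\<theta>..\<theta>'} xopt"
      using \<open>\<theta> \<le> \<theta>'\<close> \<theta> \<theta>' by (intro integral_Icc_diff[OF xopt_integrable]) auto
    also have "\<dots> \<le> integral {\<theta>..\<theta>'} (\<lambda>z. min x (xe z))"
      using \<open>\<theta> \<le> \<theta>'\<close> \<theta> \<theta>' mono_onD[OF xopt_mono, of _ \<theta>'] xopt_le_xe
      by (intro integral_le integrable_on_subinterval[OF xopt_integrable]
          integrable_on_mono_on[OF min_xe_mono_on]) (auto simp: x_def)
    also have "\<dots> = util v x \<theta>' - util v x \<theta>"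
      by (rule util_diff_eq_integral[OF x \<open>\<theta> \<le> \<theta>'\<close>, symmetric])
    finally show ?thesis by simp
  qed
  then show ?thesis by (simp add: payment_def x_def)
qed

lemma feasible_xopt: "feasible tlo thi xh v (\<lambda>\<theta>. return borel (xopt \<theta>)) payment"
  unfolding feasible_def EU_return
proof (intro conjI ballI)
  fix \<theta> assume \<theta>: "\<theta> \<in> {tlo..thi}"
  show "prob_space (return borel (xopt \<theta>))" by (simp add: prob_space_return)
  show "AE a in return borel (xopt \<theta>). a \<in> {0..xh}"
    using xopt_in_Icc by (simp add: AE_return)
  show "0 \<le> util v (xopt \<theta>) \<theta> - payment \<theta>"
    using \<theta> xopt_in_Icc
    by (auto simp: payment_def intro!: integral_nonneg integrable_on_subinterval[OF xopt_integrable])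
qed (use payment_incentive_compatible xopt_range in \<open>auto simp: AE_return\<close>)

lemma integral_f: "integral {tlo..thi} f = 1"
  using F_integral[of thi] F_thi tlo_le_thi by simp

lemma weighted_surplus_integrable:
  assumes g: "g \<in> borel_measurable (lebesgue_on {tlo..thi})" "\<And>\<theta>. \<theta> \<in> {tlo..thi} \<Longrightarrow> g \<theta> \<in> {0..xh}"
  shows "(\<lambda>\<theta>. (v (g \<theta>) + \<theta> * g \<theta>) * f \<theta>) integrable_on {tlo..thi}"
proof -
  obtain Bv where Bv: "\<forall>x\<in>{0..xh}. \<bar>v x\<bar> \<le> Bv" using v_bounded .
  have "(\<lambda>\<theta>. v (g \<theta>)) \<in> borel_measurable (lebesgue_on {tlo..thi})"
    using g by (intro borel_measurable_continuous_on_Icc_comp[OF v_continuous]) auto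
  moreover have "(\<lambda>\<theta>. \<theta>) \<in> borel_measurable (lebesgue_on {tlo..thi})"
    by (intro continuous_imp_measurable_on_sets_lebesgue continuous_intros) auto
  ultimately have meas: "(\<lambda>\<theta>. v (g \<theta>) + \<theta> * g \<theta>) \<in> borel_measurable (lebesgue_on {tlo..thi})"
    using g(1) by measurable
  have bound: "\<bar>v (g \<theta>) + \<theta> * g \<theta>\<bar> \<le> Bv + (\<bar>tlo\<bar> + \<bar>thi\<bar>) * xh" if "\<theta> \<in> {tlo..thi}" for \<theta>
  proof -
    have "\<bar>\<theta> * g \<theta>\<bar> \<le> (\<bar>tlo\<bar> + \<bar>thi\<bar>) * xh"
      unfolding abs_mult using that g(2)[OF that] by (intro mult_mono) auto
    then show ?thesis using Bv g(2)[OF that] by fastforce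
  qed
  have "f absolutely_integrable_on {tlo..thi}"
    using f_integrable f_nonneg by (rule nonnegative_absolutely_integrable_1)
  with meas bound show ?thesis by (rule bounded_measurable_mult_integrable)
qed

lemma virtual_surplus_eq:
  "\<theta> \<in> {tlo..thi} \<Longrightarrow>
    (v y + y * virtual_value \<theta>) * f \<theta> = (v y + \<theta> * y) * f \<theta> - y * (1 - integral {tlo..\<theta>} f)"
  using f_pos[of \<theta>] F_integral[of \<theta>] by (simp add: virtual_value_def field_simps)

lemma rent_by_parts:
  assumes g: "mono_on {tlo..thi} g" "\<And>\<theta>. \<theta> \<in> {tlo..thi} \<Longrightarrow> g \<theta> \<in> {0..xh}"
  shows "(\<lambda>\<theta>. g \<theta> * (1 - integral {tlo..\<theta>} f)) integrable_on {tlo..thi}"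
    and "((\<lambda>\<theta>. integral {tlo..\<theta>} g * f \<theta>) has_integral
      integral {tlo..thi} (\<lambda>\<theta>. g \<theta> * (1 - integral {tlo..\<theta>} f))) {tlo..thi}"
proof -
  have g_int: "g integrable_on {tlo..thi}" by (rule integrable_on_mono_on[OF g(1)])
  have g_bound: "\<bar>g \<theta>\<bar> \<le> xh" if "\<theta> \<in> {tlo..thi}" for \<theta> using g(2)[OF that] by auto
  note int = integrable_by_parts_indefinite[OF g_int g_bound f_integrable f_nonneg]
  have "((\<lambda>\<theta>. g \<theta> - g \<theta> * integral {tlo..\<theta>} f) has_integral
      integral {tlo..thi} g - integral {tlo..thi} (\<lambda>\<theta>. g \<theta> * integral {tlo..\<theta>} f)) {tlo..thi}"
    using g_int int(2) by (intro has_integral_diff integrable_integral)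
  moreover have "integral {tlo..thi} g - integral {tlo..thi} (\<lambda>\<theta>. g \<theta> * integral {tlo..\<theta>} f)
      = integral {tlo..thi} (\<lambda>\<theta>. integral {tlo..\<theta>} g * f \<theta>)"
    using integral_by_parts_indefinite[OF tlo_le_thi g_int g_bound f_integrable f_nonneg]
    by (simp add: integral_f)
  ultimately have R: "((\<lambda>\<theta>. g \<theta> * (1 - integral {tlo..\<theta>} f)) has_integral
      integral {tlo..thi} (\<lambda>\<theta>. integral {tlo..\<theta>} g * f \<theta>)) {tlo..thi}"
    by (simp add: right_diff_distrib)
  then show "(\<lambda>\<theta>. g \<theta> * (1 - integral {tlo..\<theta>} f)) integrable_on {tlo..thi}"
    by (rule has_integral_integrable)
  show "((\<lambda>\<theta>. integral {tlo..\<theta>} g * f \<theta>) has_integral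
      integral {tlo..thi} (\<lambda>\<theta>. g \<theta> * (1 - integral {tlo..\<theta>} f))) {tlo..thi}"
    using integrable_integral[OF int(1)] integral_unique[OF R] by simp
qed

text \<open>Revenue equivalence: the integrand is the expected payment of a mechanism with allocation
  rule \<open>g\<close> that leaves rent \<open>u + integral {tlo..\<theta>} g\<close> to type \<open>\<theta>\<close>, and integration by parts turns
  the expected rent into the information rent term of the virtual surplus.\<close>

lemma revenue_equivalence:
  assumes g: "mono_on {tlo..thi} g" "\<And>\<theta>. \<theta> \<in> {tlo..thi} \<Longrightarrow> g \<theta> \<in> {0..xh}"
  shows "(\<lambda>\<theta>. (v (g \<theta>) + g \<theta> * virtual_value \<theta>) * f \<theta>) integrable_on {tlo..thi}"
    and "((\<lambda>\<theta>. (v (g \<theta>) + \<theta> * g \<theta> - (u + integral {tlo..\<theta>} g)) * f \<theta>) has_integral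
      expected_virtual_surplus g - u) {tlo..thi}"
proof -
  define A where "A \<theta> = (v (g \<theta>) + \<theta> * g \<theta>) * f \<theta>" for \<theta>
  define R where "R = (\<lambda>\<theta>. g \<theta> * (1 - integral {tlo..\<theta>} f))"
  have A_int: "A integrable_on {tlo..thi}"
    unfolding A_def using g(2)
    by (intro weighted_surplus_integrable integrable_imp_measurable integrable_on_mono_on[OF g(1)])
  have VS: "((\<lambda>\<theta>. A \<theta> - R \<theta>) has_integral integral {tlo..thi} A - integral {tlo..thi} R) {tlo..thi}"
    using A_int rent_by_parts(1)[OF g] unfolding R_def by (intro has_integral_diff integrable_integral)
  have VS_eq: "(v (g \<theta>) + g \<theta> * virtual_value \<theta>) * f \<theta> = A \<theta> - R \<theta>" if "\<theta> \<in> {tlo..thi}" for \<theta>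
    using virtual_surplus_eq[OF that, where y="g \<theta>"] by (simp add: A_def R_def)
  from has_integral_eq[OF VS_eq[symmetric] VS]
  have VS': "((\<lambda>\<theta>. (v (g \<theta>) + g \<theta> * virtual_value \<theta>) * f \<theta>) has_integral
      integral {tlo..thi} A - integral {tlo..thi} R) {tlo..thi}" .
  then show "(\<lambda>\<theta>. (v (g \<theta>) + g \<theta> * virtual_value \<theta>) * f \<theta>) integrable_on {tlo..thi}"
    by (rule has_integral_integrable)
  have EVS: "expected_virtual_surplus g = integral {tlo..thi} A - integral {tlo..thi} R"
    unfolding expected_virtual_surplus_def using VS' by (rule integral_unique)
  have "(f has_integral 1) {tlo..thi}"
    using integrable_integral[OF f_integrable] by (simp add: integral_f)
  moreover have "((\<lambda>\<theta>. integral {tlo..\<theta>} g * f \<theta>) has_integral integral {tlo..thi} R) {tlo..thi}"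
    using rent_by_parts(2)[OF g] by (simp add: R_def)
  ultimately have "((\<lambda>\<theta>. A \<theta> - u * f \<theta> - integral {tlo..\<theta>} g * f \<theta>) has_integral
      integral {tlo..thi} A - u * 1 - integral {tlo..thi} R) {tlo..thi}"
    by (intro has_integral_diff integrable_integral[OF A_int] has_integral_mult_right)
  moreover have "(\<lambda>\<theta>. (v (g \<theta>) + \<theta> * g \<theta> - (u + integral {tlo..\<theta>} g)) * f \<theta>)
      = (\<lambda>\<theta>. A \<theta> - u * f \<theta> - integral {tlo..\<theta>} g * f \<theta>)"
    by (simp add: fun_eq_iff A_def algebra_simps)
  moreover have "integral {tlo..thi} A - u * 1 - integral {tlo..thi} R = expected_virtual_surplus g - u"
    using EVS by simp
  ultimately show "((\<lambda>\<theta>. (v (g \<theta>) + \<theta> * g \<theta> - (u + integral {tlo..\<theta>} g)) * f \<theta>) has_integral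
      expected_virtual_surplus g - u) {tlo..thi}"
    by (simp only:)
qed

lemma revenue_xopt:
  "(\<lambda>\<theta>. payment \<theta> * f \<theta>) integrable_on {tlo..thi}"
  "revenue tlo thi f payment = expected_virtual_surplus xopt"
proof -
  have eq: "(v (xopt \<theta>) + \<theta> * xopt \<theta> - (0 + integral {tlo..\<theta>} xopt)) * f \<theta> = payment \<theta> * f \<theta>"
    if "\<theta> \<in> {tlo..thi}" for \<theta>
    using util_xopt[OF that] by (simp add: payment_def)
  have "((\<lambda>\<theta>. (v (xopt \<theta>) + \<theta> * xopt \<theta> - (0 + integral {tlo..\<theta>} xopt)) * f \<theta>) has_integral
      expected_virtual_surplus xopt - 0) {tlo..thi}"
    using xopt_in_Icc by (intro revenue_equivalence xopt_mono)
  from has_integral_eq[OF eq this]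
  have "((\<lambda>\<theta>. payment \<theta> * f \<theta>) has_integral expected_virtual_surplus xopt) {tlo..thi}"
    by simp
  then show "(\<lambda>\<theta>. payment \<theta> * f \<theta>) integrable_on {tlo..thi}"
    "revenue tlo thi f payment = expected_virtual_surplus xopt"
    unfolding revenue_def by (rule has_integral_integrable, rule integral_unique)
qed

lemma v_concave: "concave_on {0..xh} v"
  by (rule strictly_concave_on_imp_concave_on[OF v_strictly_concave convex_real_interval(5)])

lemma v_has_derivative_interior: "x \<in> {0<..<xh} \<Longrightarrow> (v has_real_derivative v' x) (at x)"
  using v_deriv[of x] at_within_interior[of x "{0..xh}"] by simp

lemma expected_virtual_surplus_le_xopt:
  assumes "mono_on {tlo..thi} g" "\<And>\<theta>. \<theta> \<in> {tlo..thi} \<Longrightarrow> g \<theta> \<in> {xe tlo..xh}"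
  shows "expected_virtual_surplus g \<le> expected_virtual_surplus xopt"
  unfolding expected_virtual_surplus_def
proof (rule integral_le)
  show "(\<lambda>\<theta>. (v (g \<theta>) + g \<theta> * virtual_value \<theta>) * f \<theta>) integrable_on {tlo..thi}"
    using assms xe_range[of tlo] by (intro revenue_equivalence(1)) fastforce+
  show "(\<lambda>\<theta>. (v (xopt \<theta>) + xopt \<theta> * virtual_value \<theta>) * f \<theta>) integrable_on {tlo..thi}"
    using xopt_in_Icc by (intro revenue_equivalence(1) xopt_mono)
  fix \<theta> assume "\<theta> \<in> {tlo..thi}"
  then show "(v (g \<theta>) + g \<theta> * virtual_value \<theta>) * f \<theta> \<le> (v (xopt \<theta>) + xopt \<theta> * virtual_value \<theta>) * f \<theta>"
    using xopt_argmax[of \<theta>] assms(2) f_nonneg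
    by (intro mult_right_mono) (auto simp: is_arg_max_linorder mult.commute)
qed

end

locale screening_mechanism = screening +
  fixes X :: "real \<Rightarrow> real measure" and q :: "real \<Rightarrow> real"
  assumes feasible: "feasible tlo thi xh v X q"
begin

lemma
  shows prob_space_X: "\<theta> \<in> {tlo..thi} \<Longrightarrow> prob_space (X \<theta>)"
    and sets_X: "\<theta> \<in> {tlo..thi} \<Longrightarrow> sets (X \<theta>) = sets borel"
    and AE_X: "\<theta> \<in> {tlo..thi} \<Longrightarrow> AE a in X \<theta>. a \<in> {0..xh}"
    and incentive_compatible:
      "\<theta> \<in> {tlo..thi} \<Longrightarrow> \<theta>' \<in> {tlo..thi} \<Longrightarrow> EU v (X \<theta>') \<theta> - q \<theta>' \<le> EU v (X \<theta>) \<theta> - q \<theta>"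
    and individually_rational: "\<theta> \<in> {tlo..thi} \<Longrightarrow> 0 \<le> EU v (X \<theta>) \<theta> - q \<theta>"
    and AE_X_tlo: "AE a in X tlo. xe tlo \<le> a"
  using feasible unfolding feasible_def by auto

text \<open>The clamp at \<open>0\<close> only acts off the support of \<open>X \<theta>\<close>.\<close>

definition consumed :: "real \<Rightarrow> real \<Rightarrow> real" where
  "consumed \<theta> a = max 0 (min a (xe \<theta>))"

definition consumption :: "real \<Rightarrow> real" where
  "consumption \<theta> = (\<integral>a. consumed \<theta> a \<partial>X \<theta>)"

definition rent :: "real \<Rightarrow> real" where
  "rent \<theta> = EU v (X \<theta>) \<theta> - q \<theta>"

lemma borel_measurable_X: "\<theta> \<in> {tlo..thi} \<Longrightarrow> borel_measurable (X \<theta>) = borel_measurable borel"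
  by (rule measurable_cong_sets) (simp_all add: sets_X)

lemma consumed_in_Icc: "consumed t a \<in> {0..xh}"
  using xe_range[of t] xh_nonneg by (auto simp: consumed_def)

lemma consumed_eq: "a \<in> {0..xh} \<Longrightarrow> consumed t a = min a (xe t)"
  using xe_range[of t] by (auto simp: consumed_def)

lemma consumed_measurable: "\<theta> \<in> {tlo..thi} \<Longrightarrow> consumed t \<in> borel_measurable (X \<theta>)"
  unfolding borel_measurable_X consumed_def[abs_def]
  by (intro borel_measurable_continuous_onI continuous_intros)

lemma consumed_integrable: "\<theta> \<in> {tlo..thi} \<Longrightarrow> integrable (X \<theta>) (consumed t)"
proof -
  assume \<theta>: "\<theta> \<in> {tlo..thi}"
  interpret prob_space "X \<theta>" by (rule prob_space_X[OF \<theta>])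
  show ?thesis
    using consumed_in_Icc consumed_measurable[OF \<theta>]
    by (intro integrable_const_bound[where B=xh] AE_I2) auto
qed

lemma util_integrable: "\<theta> \<in> {tlo..thi} \<Longrightarrow> integrable (X \<theta>) (\<lambda>a. util v a t)"
proof -
  assume \<theta>: "\<theta> \<in> {tlo..thi}"
  interpret prob_space "X \<theta>" by (rule prob_space_X[OF \<theta>])
  obtain B where B: "\<forall>x\<in>{0..xh}. \<bar>util v x t\<bar> \<le> B" using util_bounded .
  have "AE a in X \<theta>. norm (util v a t) \<le> B"
    using AE_X[OF \<theta>] by eventually_elim (use B in auto)
  then show ?thesis
    using borel_measurable_util[of v t] borel_measurable_X[OF \<theta>]
    by (intro integrable_const_bound) auto
qed

lemma EU_subgradient:
  assumes \<theta>: "\<theta> \<in> {tlo..thi}" and \<theta>': "\<theta>' \<in> {tlo..thi}"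
  shows "EU v (X \<theta>') \<theta>' + (\<theta> - \<theta>') * consumption \<theta>' \<le> EU v (X \<theta>') \<theta>"
proof -
  have "EU v (X \<theta>') \<theta>' + (\<theta> - \<theta>') * consumption \<theta>'
      = (\<integral>a. util v a \<theta>' + (\<theta> - \<theta>') * consumed \<theta>' a \<partial>X \<theta>')"
    using util_integrable[OF \<theta>'] consumed_integrable[OF \<theta>'] by (simp add: EU_def consumption_def)
  also have "\<dots> \<le> EU v (X \<theta>') \<theta>"
    unfolding EU_def
  proof (rule integral_mono_AE)
    show "AE a in X \<theta>'. util v a \<theta>' + (\<theta> - \<theta>') * consumed \<theta>' a \<le> util v a \<theta>"
      using AE_X[OF \<theta>'] by eventually_elim (simp add: util_subgradient consumed_eq)
  qed (use util_integrable[OF \<theta>'] consumed_integrable[OF \<theta>'] in simp_all)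
  finally show ?thesis .
qed

lemma rent_subgradient:
  "\<theta> \<in> {tlo..thi} \<Longrightarrow> \<theta>' \<in> {tlo..thi} \<Longrightarrow> rent \<theta>' + (\<theta> - \<theta>') * consumption \<theta>' \<le> rent \<theta>"
  using EU_subgradient incentive_compatible unfolding rent_def by fastforce

lemma consumption_mono: "mono_on {tlo..thi} consumption"
proof (rule mono_onI)
  fix r s assume rs: "r \<in> {tlo..thi}" "s \<in> {tlo..thi}" "r \<le> s"
  have "(s - r) * consumption r \<le> (s - r) * consumption s"
    using rent_subgradient[OF rs(2,1)] rent_subgradient[OF rs(1,2)] by (simp add: algebra_simps)
  then show "consumption r \<le> consumption s"
    using rs(3) by (cases "r = s") (auto simp: mult_le_cancel_left)
qed

lemma consumption_tlo: "consumption tlo = xe tlo"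
proof -
  have tlo: "tlo \<in> {tlo..thi}" using tlo_le_thi by simp
  interpret prob_space "X tlo" by (rule prob_space_X[OF tlo])
  have "AE a in X tlo. consumed tlo a = xe tlo"
    using AE_X[OF tlo] AE_X_tlo by eventually_elim (simp add: consumed_eq)
  then have "consumption tlo = expectation (\<lambda>a. xe tlo)"
    unfolding consumption_def using consumed_measurable[OF tlo] by (intro integral_cong_AE) auto
  then show ?thesis by (simp add: prob_space)
qed

lemma consumption_range: "\<theta> \<in> {tlo..thi} \<Longrightarrow> consumption \<theta> \<in> {xe tlo..xh}"
proof -
  assume \<theta>: "\<theta> \<in> {tlo..thi}"
  interpret prob_space "X \<theta>" by (rule prob_space_X[OF \<theta>])
  have "consumption \<theta> \<le> xh"
    unfolding consumption_def using consumed_in_Icc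
    by (intro integral_le_const consumed_integrable[OF \<theta>] AE_I2) auto
  moreover have "consumption tlo \<le> consumption \<theta>"
    using mono_onD[OF consumption_mono] \<theta> by auto
  ultimately show ?thesis using consumption_tlo by simp
qed

lemma rent_eq: "\<theta> \<in> {tlo..thi} \<Longrightarrow> rent \<theta> = rent tlo + integral {tlo..\<theta>} consumption"
proof -
  assume \<theta>: "\<theta> \<in> {tlo..thi}"
  have "(consumption has_integral rent \<theta> - rent tlo) {tlo..\<theta>}"
    using \<theta> rent_subgradient mono_on_subset[OF consumption_mono]
    by (intro mono_subgradient_has_integral) auto
  then show ?thesis by (simp add: integral_unique)
qed

lemma EU_le_surplus:
  assumes \<theta>: "\<theta> \<in> {tlo..thi}"
  shows "EU v (X \<theta>) \<theta> \<le> v (consumption \<theta>) + \<theta> * consumption \<theta>"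
proof -
  interpret prob_space "X \<theta>" by (rule prob_space_X[OF \<theta>])
  have v_meas: "(\<lambda>a. v (consumed \<theta> a)) \<in> borel_measurable (X \<theta>)"
    using consumed_in_Icc
    by (intro borel_measurable_continuous_on_Icc_comp[OF v_continuous consumed_measurable[OF \<theta>]])
  obtain B where B: "\<forall>x\<in>{0..xh}. \<bar>v x\<bar> \<le> B" using v_bounded .
  have v_int: "integrable (X \<theta>) (\<lambda>a. v (consumed \<theta> a))"
    using v_meas B consumed_in_Icc by (intro integrable_const_bound[where B=B] AE_I2) auto
  have "EU v (X \<theta>) \<theta> = expectation (\<lambda>a. v (consumed \<theta> a) + \<theta> * consumed \<theta> a)"
    unfolding EU_def
  proof (rule integral_cong_AE)
    show "AE a in X \<theta>. util v a \<theta> = v (consumed \<theta> a) + \<theta> * consumed \<theta> a"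
      using AE_X[OF \<theta>] by eventually_elim (simp add: util_eq consumed_eq)
  qed (use borel_measurable_util borel_measurable_X[OF \<theta>] v_meas consumed_measurable[OF \<theta>] in auto)
  also have "\<dots> = expectation (\<lambda>a. v (consumed \<theta> a)) + \<theta> * consumption \<theta>"
    using v_int consumed_integrable[OF \<theta>] by (simp add: consumption_def)
  also have "\<dots> \<le> v (consumption \<theta>) + \<theta> * consumption \<theta>"
    using jensen_concave_Icc[OF v_concave v_continuous v_has_derivative_interior
        consumed_measurable[OF \<theta>]] consumed_in_Icc
    by (simp add: consumption_def)
  finally show ?thesis .
qed

lemma revenue_le: "(\<lambda>\<theta>. q \<theta> * f \<theta>) integrable_on {tlo..thi} \<Longrightarrow>
    revenue tlo thi f q \<le> expected_virtual_surplus consumption - rent tlo"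
  unfolding revenue_def
proof (rule has_integral_le[OF integrable_integral])
  show "((\<lambda>\<theta>. (v (consumption \<theta>) + \<theta> * consumption \<theta> - (rent tlo + integral {tlo..\<theta>} consumption)) * f \<theta>)
      has_integral expected_virtual_surplus consumption - rent tlo) {tlo..thi}"
    using consumption_range xe_range[of tlo] by (intro revenue_equivalence(2) consumption_mono) fastforce
  fix \<theta> assume \<theta>: "\<theta> \<in> {tlo..thi}"
  show "q \<theta> * f \<theta> \<le> (v (consumption \<theta>) + \<theta> * consumption \<theta> - (rent tlo + integral {tlo..\<theta>} consumption)) * f \<theta>"
    using EU_le_surplus[OF \<theta>] rent_eq[OF \<theta>] f_nonneg[OF \<theta>]
    by (intro mult_right_mono) (auto simp: rent_def)
qed

end

context screening
begin

lemma revenue_optimal: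
  assumes "feasible tlo thi xh v X q" "(\<lambda>\<theta>. q \<theta> * f \<theta>) integrable_on {tlo..thi}"
  shows "revenue tlo thi f q \<le> revenue tlo thi f payment"
proof -
  interpret screening_mechanism tlo thi xh v v' F f X q
    by (intro screening_mechanism.intro screening_mechanism_axioms.intro screening_axioms assms(1))
  have "revenue tlo thi f q \<le> expected_virtual_surplus consumption - rent tlo"
    by (rule revenue_le[OF assms(2)])
  also have "\<dots> \<le> expected_virtual_surplus consumption"
    using individually_rational[of tlo] tlo_le_thi by (simp add: rent_def)
  also have "\<dots> \<le> expected_virtual_surplus xopt"
    by (rule expected_virtual_surplus_le_xopt[OF consumption_mono consumption_range])
  finally show ?thesis by (simp add: revenue_xopt)
qed

end

theorem lemma3:
  fixes tlo thi xh m M :: real and F f v :: "real \<Rightarrow> real" and xs :: "real \<Rightarrow> real"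
  assumes "tlo < thi" and "0 < xh"
    \<comment> \<open>(A1)\<close>
    and "strictly_concave_on {0..xh} v"
    and "\<exists>v'. continuous_on {0..xh} v' \<and>
               (\<forall>x\<in>{0..xh}. (v has_real_derivative v' x) (at x within {0..xh}))"
    and "v 0 = 0"
    \<comment> \<open>F is the CDF with density f on [tlo, thi]\<close>
    and "f integrable_on {tlo..thi}"
    and "\<forall>\<theta>\<in>{tlo..thi}. F \<theta> = integral {tlo..\<theta>} f"
    and "F thi = 1"
    \<comment> \<open>(A2)\<close>
    and "0 < m" and "\<forall>\<theta>\<in>{tlo..thi}. m \<le> f \<theta> \<and> f \<theta> \<le> M"
    and "strict_mono_on {tlo..thi} (\<lambda>\<theta>. \<theta> - (1 - F \<theta>) / f \<theta>)"
    \<comment> \<open>x*(theta): the maximizer of the virtual surplus over [x^e(tlo), xbar]\<close>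
    and xs_def: "\<forall>\<theta>. xs \<theta> = (THE x. x \<in> {xeff v xh tlo..xh} \<and>
          (\<forall>y\<in>{xeff v xh tlo..xh}.
             v y + y * (\<theta> - (1 - F \<theta>) / f \<theta>) \<le> v x + x * (\<theta> - (1 - F \<theta>) / f \<theta>)))"
  shows
    "(\<forall>\<theta>\<in>{tlo..thi}. xs \<theta> \<in> {xeff v xh tlo..xh} \<and>
        (\<forall>y\<in>{xeff v xh tlo..xh}. y \<noteq> xs \<theta> \<longrightarrow>
           v y + y * (\<theta> - (1 - F \<theta>) / f \<theta>) < v (xs \<theta>) + xs \<theta> * (\<theta> - (1 - F \<theta>) / f \<theta>)))
     \<and> (\<forall>\<theta>\<in>{tlo..thi}. \<forall>y\<in>{0..xs \<theta>}. y \<noteq> xs \<theta> \<longrightarrow>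
           v y + \<theta> * y < v (xs \<theta>) + \<theta> * xs \<theta>)
     \<and> (let p = (\<lambda>\<theta>. util v (xs \<theta>) \<theta> - integral {tlo..\<theta>} xs) in
          feasible tlo thi xh v (\<lambda>\<theta>. return borel (xs \<theta>)) p
        \<and> (\<lambda>\<theta>. p \<theta> * f \<theta>) integrable_on {tlo..thi}
        \<and> (\<forall>X q. feasible tlo thi xh v X q \<and> (\<lambda>\<theta>. q \<theta> * f \<theta>) integrable_on {tlo..thi}
               \<longrightarrow> revenue tlo thi f q \<le> revenue tlo thi f p))"
proof -
  obtain v' where "\<forall>x\<in>{0..xh}. (v has_real_derivative v' x) (at x within {0..xh})"
    using assms(4) by blast
  then interpret screening tlo thi xh v v' F f
    using assms(1-3,6-11) by unfold_locales (auto simp: less_imp_le order_less_le_trans)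
  have xs: "xs = xopt"
    using xs_def by (simp add: fun_eq_iff xopt_def virtual_value_def)
  have "xs \<theta> \<in> {xe tlo..xh} \<and> (\<forall>y\<in>{xe tlo..xh}. y \<noteq> xs \<theta> \<longrightarrow>
      v y + y * virtual_value \<theta> < v (xs \<theta>) + xs \<theta> * virtual_value \<theta>)" for \<theta>
    using xopt_range xopt_strict_argmax by (simp add: xs mult.commute)
  moreover have "(\<lambda>\<theta>. util v (xs \<theta>) \<theta> - integral {tlo..\<theta>} xs) = payment"
    by (simp add: fun_eq_iff xs payment_def)
  ultimately show ?thesis
    using xopt_fully_consumed feasible_xopt revenue_xopt(1) revenue_optimal
    by (simp add: xs virtual_value_def) blast
qed

end
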